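(* The memoized subtyping algorithm described in the context, run on input $(T,U)$, has worst-case time complexity at most $2^{O(n^2)}$, where $n = |T| + |U|$.
   Context: Session types are given by the grammar $T ::= \mathsf{end} \mid X \mid \mu X.T \mid {?}[T_1,\dots,T_n].S \mid {!}[T_1,\dots,T_n].S \mid \&\langle l_1:T_1,\dots,l_n:T_n\rangle \mid \oplus\langle l_1:T_1,\dots,l_n:T_n\rangle$ (input, output, branch, select); the inputs $T,U$ are closed types, types are identified up to $\alpha$-conversion and substitutions are capture-avoiding. The size $|T|$ is the number of constructors: $|\mathsf{end}| = |X| = 1$, $|\mu X.T| = 1 + |T|$, $|\&\langle l_i:T_i\rangle_{i}| = |\oplus\langle l_i:T_i\rangle_{i}| = 1 + \sum_{i} |T_i|$, $|{?}[T_1,\dots,T_n].S| = |{!}[T_1,\dots,T_n].S| = 1 + \sum_i|T_i| + |S|$. The algorithm is a recursive function $\mathrm{Subtype}(\Delta,\Sigma,T,U)$, where $\Sigma$ is a finite set of pairs $V\le W$ of types and $\Delta$ is either the value false or a set of judgements $\Sigma'\vdash T'\le U'$; it is called initially as $\mathrm{Subtype}(\emptyset,\emptyset,T,U)$, and $T$ is reported a subtype of $U$ iff the result is not false. It proceeds as follows: if $\Delta$ = false return false; if the judgement $\Sigma\vdash T\le U$ is already in $\Delta$ return $\Delta$; otherwise add $\Sigma \vdash T\le U$ to $\Delta$ and then: if $T\le U\in\Sigma$ return $\Delta$; else if $T=U=\mathsf{end}$ return $\Delta$; else if $T=\mu X.T'$ return $\mathrm{Subtype}(\Delta,\Sigma\cup\{T\le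 U\},T'[T/X],U)$; else if $U = \mu X.U'$ return $\mathrm{Subtype}(\Delta,\Sigma\cup\{T\le U\},T,U'[U/X])$; else if $T={?}[T_1,\dots,T_k].V$ and $U={?}[U_1,\dots,U_k].W$, set $\Delta\gets\mathrm{Subtype}(\Delta,\Sigma,T_i,U_i)$ for $i=1,\dots,k$ in turn and return $\mathrm{Subtype}(\Delta,\Sigma,V,W)$; else if $T={!}[T_1,\dots,T_k].V$ and $U={!}[U_1,\dots,U_k].W$, set $\Delta\gets\mathrm{Subtype}(\Delta,\Sigma,U_i,T_i)$ for $i=1,\dots,k$ in turn and return $\mathrm{Subtype}(\Delta,\Sigma,V,W)$; else if $T=\&\langle l_i:T_i\rangle_{1\le i\le m}$, $U=\&\langle l_i:U_i\rangle_{1\le i\le n}$ with $m\le n$, set $\Delta\gets\mathrm{Subtype}(\Delta,\Sigma,T_i,U_i)$ for $i=1,\dots,m$ and return $\Delta$; else if $T=\oplus\langle l_i:T_i\rangle_{1\le i\le n}$, $U=\oplus\langle l_i:U_i\rangle_{1\le i\le m}$ with $m\le n$, set $\Delta\gets\mathrm{Subtype}(\Delta,\Sigma,T_i,U_i)$ for $i=1,\dots,m$ and return $\Delta$; otherwise return false. *)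

theory Defs
  imports Main
begin

text \<open>Session types, with bound type variables represented by de Bruijn indices,
so that alpha-equivalent types are syntactically equal.  Labels are natural numbers.\<close>

type_synonym label = nat

datatype stype =
    End
  | Var nat
  | Mu stype
  | In "stype list" stype
  | Out "stype list" stype
  | Branch "(label \<times> stype) list"
  | Select "(label \<times> stype) list"

fun tsize :: "stype \<Rightarrow> nat" where
  "tsize End = 1"
| "tsize (Var i) = 1"
| "tsize (Mu t) = 1 + tsize t"
| "tsize (In ts s) = 1 + sum_list (map tsize ts) + tsize s"
| "tsize (Out ts s) = 1 + sum_list (map tsize ts) + tsize s"
| "tsize (Branch ls) = 1 + sum_list (map (\<lambda>p. tsize (snd p)) ls)"
| "tsize (Select ls) = 1 + sum_list (map (\<lambda>p. tsize (snd p)) ls)"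

fun closed_at :: "nat \<Rightarrow> stype \<Rightarrow> bool" where
  "closed_at k End = True"
| "closed_at k (Var i) = (i < k)"
| "closed_at k (Mu t) = closed_at (Suc k) t"
| "closed_at k (In ts s) = ((\<forall>t\<in>set ts. closed_at k t) \<and> closed_at k s)"
| "closed_at k (Out ts s) = ((\<forall>t\<in>set ts. closed_at k t) \<and> closed_at k s)"
| "closed_at k (Branch ls) = (\<forall>p\<in>set ls. closed_at k (snd p))"
| "closed_at k (Select ls) = (\<forall>p\<in>set ls. closed_at k (snd p))"

definition closed :: "stype \<Rightarrow> bool" where
  "closed t = closed_at 0 t"

fun lift :: "nat \<Rightarrow> stype \<Rightarrow> stype" where
  "lift k End = End"
| "lift k (Var i) = (if i < k then Var i else Var (Suc i))"
| "lift k (Mu t) = Mu (lift (Suc k) t)"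
| "lift k (In ts s) = In (map (lift k) ts) (lift k s)"
| "lift k (Out ts s) = Out (map (lift k) ts) (lift k s)"
| "lift k (Branch ls) = Branch (map (\<lambda>p. (fst p, lift k (snd p))) ls)"
| "lift k (Select ls) = Select (map (\<lambda>p. (fst p, lift k (snd p))) ls)"

fun subst :: "nat \<Rightarrow> stype \<Rightarrow> stype \<Rightarrow> stype" where
  "subst k u End = End"
| "subst k u (Var i) = (if i < k then Var i else if i = k then u else Var (i - 1))"
| "subst k u (Mu t) = Mu (subst (Suc k) (lift 0 u) t)"
| "subst k u (In ts s) = In (map (subst k u) ts) (subst k u s)"
| "subst k u (Out ts s) = Out (map (subst k u) ts) (subst k u s)"
| "subst k u (Branch ls) = Branch (map (\<lambda>p. (fst p, subst k u (snd p))) ls)"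
| "subst k u (Select ls) = Select (map (\<lambda>p. (fst p, subst k u (snd p))) ls)"

text \<open>The unfolding T'[T/X] of T = mu X. T' (here T = Mu body).\<close>
definition unfold :: "stype \<Rightarrow> stype" where
  "unfold body = subst 0 (Mu body) body"

text \<open>The sequence of recursive calls made by the structural cases
  (input, output, branch, select); None if no structural case applies.\<close>
fun children :: "stype \<Rightarrow> stype \<Rightarrow> (stype \<times> stype) list option" where
  "children (In Ts V) (In Us W) =
     (if length Ts = length Us then Some (zip Ts Us @ [(V, W)]) else None)"
| "children (Out Ts V) (Out Us W) =
     (if length Ts = length Us then Some (zip Us Ts @ [(V, W)]) else None)"
| "children (Branch ts) (Branch us) =
     (if length ts \<le> length us \<and> set (map fst ts) \<subseteq> set (map fst us)
      then Some (map (\<lambda>p. (snd p, the (map_of us (fst p)))) ts) else None)"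
| "children (Select ts) (Select us) =
     (if length us \<le> length ts \<and> set (map fst us) \<subseteq> set (map fst ts)
      then Some (map (\<lambda>p. (the (map_of ts (fst p)), snd p)) us) else None)"
| "children T U = None"

fun is_mu :: "stype \<Rightarrow> bool" where
  "is_mu (Mu t) = True"
| "is_mu _ = False"

type_synonym assm = "(stype \<times> stype) set"
type_synonym judg = "assm \<times> stype \<times> stype"
text \<open>Delta: None represents the value false, Some D a set of judgements.\<close>
type_synonym delta = "judg set option"

definition jsize :: "assm \<Rightarrow> stype \<Rightarrow> stype \<Rightarrow> nat" where
  "jsize S T U = tsize T + tsize U + (\<Sum>p\<in>S. tsize (fst p) + tsize (snd p))"

text \<open>Cost model for the local work of one call with Delta = Some D: the membership
  test of the judgement in D (naively, one comparison per element of D, each linear in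
  the judgement size), plus the remaining local work (set insertion, membership in Sigma,
  substitution, pattern matching), all bounded by this quantity.\<close>
definition call_cost :: "judg set \<Rightarrow> assm \<Rightarrow> stype \<Rightarrow> stype \<Rightarrow> nat" where
  "call_cost D S T U = (1 + card D) * (1 + jsize S T U)"

text \<open>Big-step semantics of Subtype(Delta, Sigma, T, U) with its total running time:
  sub D S T U D' k  means the call returns D' and takes time k (all nested calls included).
  subs runs a sequence of calls, threading Delta.\<close>
inductive sub :: "delta \<Rightarrow> assm \<Rightarrow> stype \<Rightarrow> stype \<Rightarrow> delta \<Rightarrow> nat \<Rightarrow> bool"
  and subs :: "delta \<Rightarrow> assm \<Rightarrow> (stype \<times> stype) list \<Rightarrow> delta \<Rightarrow> nat \<Rightarrow> bool"
where
  sub_false: "sub None S T U None 1"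
| sub_memo: "(S, T, U) \<in> D \<Longrightarrow> sub (Some D) S T U (Some D) (call_cost D S T U)"
| sub_assm: "(S, T, U) \<notin> D \<Longrightarrow> (T, U) \<in> S \<Longrightarrow>
    sub (Some D) S T U (Some (insert (S, T, U) D)) (call_cost D S T U)"
| sub_end: "(S, End, End) \<notin> D \<Longrightarrow> (End, End) \<notin> S \<Longrightarrow>
    sub (Some D) S End End (Some (insert (S, End, End) D)) (call_cost D S End End)"
| sub_muL: "(S, T, U) \<notin> D \<Longrightarrow> (T, U) \<notin> S \<Longrightarrow> T = Mu T' \<Longrightarrow>
    sub (Some (insert (S, T, U) D)) (insert (T, U) S) (unfold T') U D' k \<Longrightarrow>
    sub (Some D) S T U D' (call_cost D S T U + k)"
| sub_muR: "(S, T, U) \<notin> D \<Longrightarrow> (T, U) \<notin> S \<Longrightarrow> \<not> is_mu T \<Longrightarrow> U = Mu U' \<Longrightarrow>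
    sub (Some (insert (S, T, U) D)) (insert (T, U) S) T (unfold U') D' k \<Longrightarrow>
    sub (Some D) S T U D' (call_cost D S T U + k)"
| sub_struct: "(S, T, U) \<notin> D \<Longrightarrow> (T, U) \<notin> S \<Longrightarrow> children T U = Some ps \<Longrightarrow>
    subs (Some (insert (S, T, U) D)) S ps D' k \<Longrightarrow>
    sub (Some D) S T U D' (call_cost D S T U + k)"
| sub_fail: "(S, T, U) \<notin> D \<Longrightarrow> (T, U) \<notin> S \<Longrightarrow> \<not> (T = End \<and> U = End) \<Longrightarrow>
    \<not> is_mu T \<Longrightarrow> \<not> is_mu U \<Longrightarrow> children T U = None \<Longrightarrow>
    sub (Some D) S T U None (call_cost D S T U)"
| subs_nil: "subs D S [] D 0"
| subs_cons: "sub D S T U D1 k1 \<Longrightarrow> subs D1 S ps D2 k2 \<Longrightarrow>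
    subs D S ((T, U) # ps) D2 (k1 + k2)"

end

theory Submission
  imports Defs
begin

(* Every type the algorithm meets lies in a finite set G of closed types: the subterm
   occurrences of T and U, each closed by substituting for its free variables the enclosing
   mu-types (themselves closed in the same way). G is closed under unfolding and under taking
   components, has at most n elements, and its members have size at most n^n. So every
   judgement Sigma |- V <= W of the run lies in the set of 2^(|G|^2) |G|^2 judgements over G,
   and every call not answered from Delta adds a new one to Delta. With the number of
   judgements over G missing from Delta as potential, each such call pays for its own work and
   for the at most 2 n^n calls it issues, which gives a total time of (2^(n^2))^O(1). *)

section \<open>Components and successors of a type\<close>

fun components :: "stype \<Rightarrow> stype list" where
  "components (In ts s) = ts @ [s]"
| "components (Out ts s) = ts @ [s]"
| "components (Branch ls) = map snd ls"
| "components (Select ls) = map snd ls"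
| "components _ = []"

fun successors :: "stype \<Rightarrow> stype set" where
  "successors (Mu b) = {unfold b}"
| "successors t = set (components t)"

lemma successors_node: "\<not> is_mu t \<Longrightarrow> successors t = set (components t)"
  by (cases t) simp_all

lemma stype_components_induct [case_names Var Mu node]:
  assumes "\<And>i. P (Var i)" and "\<And>b. P b \<Longrightarrow> P (Mu b)"
    and "\<And>t. \<not> is_mu t \<Longrightarrow> (\<And>i. t \<noteq> Var i) \<Longrightarrow> (\<And>x. x \<in> set (components t) \<Longrightarrow> P x) \<Longrightarrow> P t"
  shows "P t"
proof (induction t)
  case End show ?case by (rule assms(3)) auto
next
  case (In ts s) show ?case by (rule assms(3)) (use In in auto)
next
  case (Out ts s) show ?case by (rule assms(3)) (use Out in auto)
next
  case (Branch ls) show ?case by (rule assms(3)) (use Branch in auto)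
next
  case (Select ls) show ?case by (rule assms(3)) (use Select in auto)
qed (auto intro: assms(1,2))

lemma tsize_pos: "1 \<le> tsize t"
  by (cases t) auto

lemma tsize_components: "\<not> is_mu t \<Longrightarrow> tsize t = 1 + sum_list (map tsize (components t))"
  by (cases t) (simp_all add: o_def)

lemma tsize_component_less: "x \<in> set (components t) \<Longrightarrow> tsize x < tsize t"
  using tsize_components[of t] member_le_sum_list[of "tsize x" "map tsize (components t)"]
  by (cases "is_mu t") (auto elim: is_mu.elims)

lemma length_components_le: "length (components t) \<le> tsize t"
proof (cases "is_mu t")
  case False
  have "length (components t) = sum_list (map (\<lambda>_. 1) (components t))"
    by (simp add: sum_list_triv)
  also have "\<dots> \<le> sum_list (map tsize (components t))"
    by (rule sum_list_mono) (rule tsize_pos)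
  finally show ?thesis using tsize_components[OF False] by simp
qed (auto elim: is_mu.elims)

lemma closed_at_components: "closed_at k t \<Longrightarrow> x \<in> set (components t) \<Longrightarrow> closed_at k x"
  by (cases t) auto

section \<open>Closing substitutions\<close>

fun subst_list :: "nat \<Rightarrow> stype list \<Rightarrow> stype \<Rightarrow> stype" where
  "subst_list k env End = End"
| "subst_list k env (Var i) =
     (if i < k then Var i else if i - k < length env then env ! (i - k) else Var (i - length env))"
| "subst_list k env (Mu t) = Mu (subst_list (Suc k) env t)"
| "subst_list k env (In ts s) = In (map (subst_list k env) ts) (subst_list k env s)"
| "subst_list k env (Out ts s) = Out (map (subst_list k env) ts) (subst_list k env s)"
| "subst_list k env (Branch ls) = Branch (map (\<lambda>p. (fst p, subst_list k env (snd p))) ls)"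
| "subst_list k env (Select ls) = Select (map (\<lambda>p. (fst p, subst_list k env (snd p))) ls)"

lemma closed_at_mono: "closed_at m t \<Longrightarrow> m \<le> k \<Longrightarrow> closed_at k t"
  by (induction t arbitrary: m k) fastforce+

lemma lift_closed_at: "closed_at m t \<Longrightarrow> m \<le> k \<Longrightarrow> lift k t = t"
  by (induction t arbitrary: m k) (auto intro!: map_idI)

lemma subst_closed_at: "closed_at k t \<Longrightarrow> subst k u t = t"
  by (induction t arbitrary: k u) (auto intro!: map_idI)

lemma subst_list_Nil: "subst_list k [] t = t"
  by (induction t arbitrary: k) (auto intro!: map_idI)

lemma closed_at_subst_list:
  "closed_at (k + length env) t \<Longrightarrow> \<forall>e\<in>set env. closed e \<Longrightarrow> closed_at k (subst_list k env t)"
  by (induction t arbitrary: k) (auto simp: closed_def intro: closed_at_mono)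

lemma subst_subst_list:
  assumes "\<forall>e\<in>set env. closed e" and "closed u"
  shows "subst k u (subst_list (Suc k) env t) = subst_list k (u # env) t"
  using assms
proof (induction t arbitrary: k u)
  case (Var i)
  consider "i \<le> k" | "k < i" "i - Suc k < length env" | "k < i" "length env \<le> i - Suc k"
    by linarith
  then show ?case
  proof cases
    case 2
    then have "closed_at k (env ! (i - Suc k))"
      using Var.prems by (auto simp: closed_def intro: closed_at_mono)
    moreover have "i - k = Suc (i - Suc k)" using 2 by simp
    ultimately show ?thesis using 2 by (simp add: subst_closed_at)
  qed auto
next
  case (Mu t)
  then show ?case using lift_closed_at[of 0 u 0] by (simp add: closed_def)
qed auto

lemma unfold_subst_list:
  assumes "\<forall>e\<in>set env. closed e" and "closed_at (length env) (Mu b)"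
  shows "unfold (subst_list 1 env b) = subst_list 0 (Mu (subst_list 1 env b) # env) b"
proof -
  have "closed (Mu (subst_list 1 env b))"
    using closed_at_subst_list[of 0 env "Mu b"] assms by (simp add: closed_def)
  then show ?thesis using subst_subst_list[of env _ 0 b] assms(1) by (simp add: unfold_def)
qed

lemma subst_list_node:
  assumes "\<not> is_mu t" and "\<And>i. t \<noteq> Var i"
  shows "\<not> is_mu (subst_list k env t)"
    and "components (subst_list k env t) = map (subst_list k env) (components t)"
  using assms by (cases t; simp add: o_def)+

lemma tsize_subst_list:
  assumes "\<forall>e\<in>set env. tsize e \<le> B" and "1 \<le> B"
  shows "tsize (subst_list k env t) \<le> tsize t * B"
  using assms
proof (induction t arbitrary: k rule: stype_components_induct)
  case (Mu b)
  have "tsize (subst_list (Suc k) env b) \<le> tsize b * B" using Mu by blast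
  then show ?case using Mu.prems(2) by simp
next
  case (node t)
  note sub = subst_list_node[OF node.hyps(1,2)]
  have "sum_list (map (tsize \<circ> subst_list k env) (components t))
        \<le> sum_list (map (\<lambda>x. tsize x * B) (components t))"
    using node.IH node.prems by (intro sum_list_mono) auto
  also have "\<dots> = sum_list (map tsize (components t)) * B"
    by (simp add: sum_list_mult_const)
  finally show ?case
    using node.prems tsize_components[OF sub(1)] tsize_components[OF node.hyps(1)]
    by (simp add: sub(2) algebra_simps)
qed auto

section \<open>The closure of a type\<close>

(* One entry per constructor of t: the subterm at that position, closed by substituting the
   closed mu-types that enclose it; env lists these mu-types, innermost first. *)
fun closure_list :: "stype list \<Rightarrow> stype \<Rightarrow> stype list" where
  "closure_list env (Mu b) =
     subst_list 0 env (Mu b) # closure_list (subst_list 0 env (Mu b) # env) b"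
| "closure_list env t = subst_list 0 env t # concat (map (closure_list env) (components t))"

lemma closure_list_node:
  "\<not> is_mu t \<Longrightarrow>
     closure_list env t = subst_list 0 env t # concat (map (closure_list env) (components t))"
  by (cases t) simp_all

lemma subst_list_in_closure_list: "subst_list 0 env t \<in> set (closure_list env t)"
  by (cases t) simp_all

lemma length_closure_list: "length (closure_list env t) = tsize t"
proof (induction t arbitrary: env rule: stype_components_induct)
  case (node t)
  have "sum_list (map (length \<circ> closure_list env) (components t))
        = sum_list (map tsize (components t))"
    using node.IH by (metis comp_apply map_eq_conv)
  then show ?case
    using tsize_components[OF node.hyps(1)]
    by (simp add: closure_list_node[OF node.hyps(1)] length_concat)
qed simp_all

lemma successors_closure_list:
  assumes "\<forall>e\<in>set env. closed e \<and> successors e \<subseteq> G" and "closed_at (length env) t"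
    and "set (closure_list env t) \<subseteq> G" and "x \<in> set (closure_list env t)"
  shows "successors x \<subseteq> G"
  using assms
proof (induction t arbitrary: env rule: stype_components_induct)
  case (Var i)
  then show ?case by auto
next
  case (Mu b)
  let ?m = "subst_list 0 env (Mu b)"
  have "closed ?m"
    using closed_at_subst_list[of 0 env "Mu b"] Mu.prems(1,2) by (simp add: closed_def)
  moreover have "successors ?m \<subseteq> G"
    using unfold_subst_list[of env b] subst_list_in_closure_list[of "?m # env" b] Mu.prems(1-3)
    by auto
  ultimately show ?case
    using Mu.IH[of "?m # env"] Mu.prems by auto
next
  case (node t)
  note sub = subst_list_node[OF node.hyps(1,2)] and cl = closure_list_node[OF node.hyps(1)]
  from node.prems(4) consider "x = subst_list 0 env t"
    | c where "c \<in> set (components t)" and "x \<in> set (closure_list env c)"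
    by (auto simp: cl)
  then show ?case
  proof cases
    case 1
    then show ?thesis
      using subst_list_in_closure_list[of env] node.prems(3)
      by (auto simp: successors_node[OF sub(1)] sub(2) cl)
  next
    case 2
    moreover have "set (closure_list env c) \<subseteq> G"
      using 2(1) node.prems(3) by (auto simp: cl)
    ultimately show ?thesis
      using node.IH[of c env] node.prems(1,2) closed_at_components by blast
  qed
qed

lemma self_power_mono: "1 \<le> a \<Longrightarrow> a \<le> b \<Longrightarrow> (a::nat) ^ a \<le> b ^ b"
  by (metis order_trans power_increasing power_mono zero_le)

lemma tsize_closure_list:
  assumes "\<forall>e\<in>set env. tsize e \<le> B" and "1 \<le> B" and "x \<in> set (closure_list env t)"
  shows "tsize x \<le> B * tsize t ^ tsize t"
  using assms
proof (induction t arbitrary: env B rule: stype_components_induct)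
  case (Var i)
  then show ?case using tsize_subst_list[of env B 0 "Var i"] by simp
next
  case (Mu b)
  let ?m = "subst_list 0 env (Mu b)" and ?n = "1 + tsize b"
  have m: "tsize ?m \<le> ?n * B" using tsize_subst_list[of env B 0 "Mu b"] Mu.prems(1,2) by simp
  from Mu.prems(3) have "x = ?m \<or> x \<in> set (closure_list (?m # env) b)" by simp
  then show ?case
  proof
    assume "x = ?m"
    then show ?thesis
      using m mult_le_mono1[OF self_le_power[of ?n ?n], of B] by (simp add: mult.commute)
  next
    assume "x \<in> set (closure_list (?m # env) b)"
    then have "tsize x \<le> ?n * B * tsize b ^ tsize b"
      using Mu.IH[of "?m # env" "?n * B"] m Mu.prems(1,2) by fastforce
    also have "\<dots> \<le> ?n * B * ?n ^ tsize b"
      by (intro mult_le_mono2 power_mono) simp_all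
    also have "\<dots> = B * ?n ^ ?n"
      by (simp only: power_Suc[symmetric] ac_simps plus_1_eq_Suc)
    finally show ?thesis by simp
  qed
next
  case (node t)
  from node.prems(3) consider "x = subst_list 0 env t"
    | c where "c \<in> set (components t)" and "x \<in> set (closure_list env c)"
    by (auto simp: closure_list_node[OF node.hyps(1)])
  then show ?case
  proof cases
    case 1
    then have "tsize x \<le> tsize t * B" using tsize_subst_list node.prems(1,2) by blast
    also have "\<dots> \<le> B * tsize t ^ tsize t"
      using mult_le_mono1[OF self_le_power[of "tsize t" "tsize t"], of B] tsize_pos[of t]
      by (simp add: mult.commute)
    finally show ?thesis .
  next
    case 2
    then have "tsize x \<le> B * tsize c ^ tsize c" using node.IH node.prems(1,2) by blast
    also have "\<dots> \<le> B * tsize t ^ tsize t"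
      using self_power_mono[OF tsize_pos less_imp_le[OF tsize_component_less[OF 2(1)]]] by simp
    finally show ?thesis .
  qed
qed

definition type_closure :: "stype \<Rightarrow> stype set" where
  "type_closure t = set (closure_list [] t)"

lemma mem_type_closure: "t \<in> type_closure t"
  using subst_list_in_closure_list[of "[]" t] by (simp add: type_closure_def subst_list_Nil)

lemma card_type_closure_le: "card (type_closure t) \<le> tsize t"
  using card_length[of "closure_list [] t"] by (simp add: type_closure_def length_closure_list)

lemma tsize_type_closure_le: "x \<in> type_closure t \<Longrightarrow> tsize x \<le> tsize t ^ tsize t"
  using tsize_closure_list[of "[]" 1 x t] by (simp add: type_closure_def)

lemma successors_type_closure: "closed t \<Longrightarrow> x \<in> type_closure t \<Longrightarrow> successors x \<subseteq> type_closure t"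
  using successors_closure_list[of "[]" "type_closure t" t x]
  by (simp add: type_closure_def closed_def)

lemma length_children_le:
  "children T U = Some ps \<Longrightarrow> length ps \<le> length (components T) + length (components U)"
  by (induction T U rule: children.induct) (auto split: if_splits)

lemma the_map_of_in_snd: "l \<in> fst ` set xs \<Longrightarrow> the (map_of xs l) \<in> snd ` set xs"
  by (metis (no_types, lifting) image_iff map_of_SomeD map_of_eq_None_iff option.collapse snd_conv)

lemma children_successors:
  "children T U = Some ps \<Longrightarrow> set ps \<subseteq> (successors T \<union> successors U) \<times> (successors T \<union> successors U)"
  by (induction T U rule: children.induct)
    (auto split: if_splits dest: set_zip_leftD set_zip_rightD,
      (metis (no_types) fst_conv image_eqI subsetD the_map_of_in_snd)+)

lemma sub_result_grows:
  "sub \<Delta> S T U \<Delta>' k \<Longrightarrow> \<Delta>' = Some D' \<Longrightarrow> \<exists>D. \<Delta> = Some D \<and> insert (S, T, U) D \<subseteq> D'"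
  "subs \<Delta> S ps \<Delta>' k \<Longrightarrow> \<Delta>' = Some D' \<Longrightarrow> \<exists>D. \<Delta> = Some D \<and> D \<subseteq> D'"
  by (induction arbitrary: D' and D' rule: sub_subs.inducts) fastforce+

section \<open>Amortised running time over a finite universe of types\<close>

lemma run_time_bound_arith:
  fixes a m n :: nat
  assumes "a \<le> n\<^sup>2" and "m \<le> n ^ n" and "1 \<le> n"
  shows "(1 + 2 ^ a * a)\<^sup>2 * (1 + 2 * m * (1 + a)) * (2 * m + 1) \<le> 2 ^ (13 * n\<^sup>2)"
proof -
  define P :: nat where "P = 2 ^ n\<^sup>2"
  have aP: "a < P" using assms(1) less_exp[of "n\<^sup>2"] unfolding P_def by linarith
  have "(2::nat) ^ a \<le> P" using assms(1) unfolding P_def by (intro power_increasing) auto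
  then have "2 ^ a * a \<le> P * P" using aP by (intro mult_le_mono) auto
  moreover have PP: "1 \<le> P * P" using aP by simp
  ultimately have h1: "1 + 2 ^ a * a \<le> 2 * P\<^sup>2" unfolding power2_eq_square by linarith
  have "m \<le> (2 ^ n) ^ n"
    using assms(2) less_exp[of n] by (meson less_imp_le order_trans power_mono zero_le)
  then have mP: "m \<le> P" by (simp add: P_def power_mult[symmetric] power2_eq_square)
  then have "2 * m * (1 + a) \<le> 2 * P * P" using aP by (intro mult_le_mono) auto
  then have h2: "1 + 2 * m * (1 + a) \<le> 3 * P\<^sup>2" using PP unfolding power2_eq_square by linarith
  have h3: "2 * m + 1 \<le> 3 * P" using mP aP by linarith
  have "(1 + 2 ^ a * a)\<^sup>2 * (1 + 2 * m * (1 + a)) * (2 * m + 1) \<le> (2 * P\<^sup>2)\<^sup>2 * (3 * P\<^sup>2) * (3 * P)"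
    using h1 h2 h3 by (intro mult_le_mono power_mono) auto
  also have "\<dots> = 36 * P ^ 7" by (simp add: eval_nat_numeral algebra_simps)
  also have "\<dots> \<le> 2 ^ 6 * P ^ 7" by simp
  also have "\<dots> = 2 ^ (6 + 7 * n\<^sup>2)"
    by (simp add: P_def power_add power_mult[symmetric] mult.commute)
  also have "\<dots> \<le> 2 ^ (13 * n\<^sup>2)"
    using assms(3) by (intro power_increasing) (auto simp: power2_eq_square)
  finally show ?thesis .
qed

locale type_universe =
  fixes G :: "stype set"
  assumes finite_G: "finite G"
    and successors_closed: "t \<in> G \<Longrightarrow> successors t \<subseteq> G"
begin

definition judgements :: "judg set" where
  "judgements = Pow (G \<times> G) \<times> G \<times> G"

lemma mem_judgements [simp]: "(S, T, U) \<in> judgements \<longleftrightarrow> S \<subseteq> G \<times> G \<and> T \<in> G \<and> U \<in> G"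
  by (auto simp: judgements_def)

lemma finite_judgements: "finite judgements"
  using finite_G by (simp add: judgements_def)

lemma card_judgements: "card judgements = 2 ^ card (G \<times> G) * card (G \<times> G)"
  using finite_G by (simp add: judgements_def card_cartesian_product card_Pow)

definition max_size :: nat where
  "max_size = Max (tsize ` G)"

lemma tsize_le_max_size: "t \<in> G \<Longrightarrow> tsize t \<le> max_size"
  using finite_G by (simp add: max_size_def)

definition step_cost :: nat where
  "step_cost = (1 + card judgements) * (1 + 2 * max_size * (1 + card (G \<times> G)))"

(* What each judgement newly added to Delta pays for: the work of its own call and the call
   overhead of the at most 2 max_size recursive calls it issues. *)
definition judgement_charge :: nat where
  "judgement_charge = step_cost * (2 * max_size + 1)"

definition potential :: "delta \<Rightarrow> nat" where
  "potential \<Delta> = (case \<Delta> of None \<Rightarrow> 0 | Some D \<Rightarrow> card (judgements - D))"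

lemma jsize_le: "(S, T, U) \<in> judgements \<Longrightarrow> jsize S T U \<le> 2 * max_size * (1 + card (G \<times> G))"
proof -
  assume "(S, T, U) \<in> judgements"
  then have S: "S \<subseteq> G \<times> G" and "tsize T + tsize U \<le> 2 * max_size"
    using tsize_le_max_size[of T] tsize_le_max_size[of U] by auto
  have "(\<Sum>p\<in>S. tsize (fst p) + tsize (snd p)) \<le> card S * (2 * max_size)"
    using sum_bounded_above[of S "\<lambda>p. tsize (fst p) + tsize (snd p)" "2 * max_size"]
      S tsize_le_max_size by (force simp: mult_2 intro: add_mono)
  also have "\<dots> \<le> card (G \<times> G) * (2 * max_size)"
    using S finite_G by (intro mult_le_mono1 card_mono) auto
  finally show ?thesis
    using \<open>tsize T + tsize U \<le> 2 * max_size\<close> by (simp add: jsize_def algebra_simps)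
qed

lemma call_cost_le_step_cost:
  "(S, T, U) \<in> judgements \<Longrightarrow> D \<subseteq> judgements \<Longrightarrow> call_cost D S T U \<le> step_cost"
  unfolding call_cost_def step_cost_def
  using jsize_le card_mono[OF finite_judgements] by (intro mult_le_mono) auto

lemma potential_insert:
  "j \<in> judgements \<Longrightarrow> j \<notin> D \<Longrightarrow> potential (Some (insert j D)) + 1 = potential (Some D)"
proof -
  assume "j \<in> judgements" "j \<notin> D"
  then have "card (judgements - D) > 0"
    using finite_judgements by (auto simp: card_gt_0_iff)
  then show ?thesis using \<open>j \<in> judgements\<close> \<open>j \<notin> D\<close> by (simp add: potential_def)
qed

lemma potential_insert_le: "potential (Some (insert j D)) \<le> potential (Some D)"
  using finite_judgements by (simp add: potential_def card_mono Diff_mono subset_insertI)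


lemma children_in_universe:
  "children T U = Some ps \<Longrightarrow> T \<in> G \<Longrightarrow> U \<in> G \<Longrightarrow> set ps \<subseteq> G \<times> G"
  using children_successors successors_closed by blast

lemma unfold_in_universe: "Mu b \<in> G \<Longrightarrow> unfold b \<in> G"
  using successors_closed by fastforce

lemma sub_subset_judgements:
  "sub \<Delta> S T U \<Delta>' k \<Longrightarrow> (S, T, U) \<in> judgements \<Longrightarrow>
     pred_option (\<lambda>D. D \<subseteq> judgements) \<Delta> \<Longrightarrow> pred_option (\<lambda>D. D \<subseteq> judgements) \<Delta>'"
  "subs \<Delta> S ps \<Delta>' k \<Longrightarrow> S \<subseteq> G \<times> G \<Longrightarrow> set ps \<subseteq> G \<times> G \<Longrightarrow>
     pred_option (\<lambda>D. D \<subseteq> judgements) \<Delta> \<Longrightarrow> pred_option (\<lambda>D. D \<subseteq> judgements) \<Delta>'"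
  by (induction rule: sub_subs.inducts)
    (auto simp: unfold_in_universe dest: children_in_universe)

lemma fresh_call_cost:
  assumes "(S, T, U) \<in> judgements" and "(S, T, U) \<notin> D" and "D \<subseteq> judgements"
    and "k + judgement_charge * potential \<Delta>'
           \<le> judgement_charge * potential (Some (insert (S, T, U) D)) + X"
    and "X \<le> judgement_charge"
  shows "call_cost D S T U + k + judgement_charge * potential \<Delta>'
           \<le> judgement_charge * potential (Some D) + step_cost"
proof -
  have "judgement_charge * potential (Some D)
          = judgement_charge * potential (Some (insert (S, T, U) D)) + judgement_charge"
    using potential_insert[OF assms(1,2)] by (metis add_mult_distrib2 mult.right_neutral)
  then show ?thesis
    using assms(4,5) call_cost_le_step_cost[OF assms(1,3)] by linarith
qed

lemma leaf_call_cost: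
  assumes "(S, T, U) \<in> judgements" and "D \<subseteq> judgements"
  shows "call_cost D S T U + judgement_charge * potential (Some (insert (S, T, U) D))
           \<le> judgement_charge * potential (Some D) + step_cost"
  using add_mono[OF call_cost_le_step_cost[OF assms] mult_le_mono2[OF potential_insert_le]]
  by (simp add: add.commute)

lemma sub_cost_amortized:
  "sub \<Delta> S T U \<Delta>' k \<Longrightarrow> (S, T, U) \<in> judgements \<Longrightarrow> pred_option (\<lambda>D. D \<subseteq> judgements) \<Delta> \<Longrightarrow>
     k + judgement_charge * potential \<Delta>' \<le> judgement_charge * potential \<Delta> + step_cost"
  "subs \<Delta> S ps \<Delta>' k \<Longrightarrow> S \<subseteq> G \<times> G \<Longrightarrow> set ps \<subseteq> G \<times> G \<Longrightarrow>
     pred_option (\<lambda>D. D \<subseteq> judgements) \<Delta> \<Longrightarrow>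
     k + judgement_charge * potential \<Delta>' \<le> judgement_charge * potential \<Delta> + step_cost * length ps"
proof (induction rule: sub_subs.inducts)
  case (sub_false S T U)
  then show ?case by (simp add: step_cost_def potential_def)
next
  case (sub_memo S T U D)
  then show ?case using call_cost_le_step_cost by simp
next
  case (sub_assm S T U D)
  then show ?case using leaf_call_cost by simp
next
  case (sub_end S D)
  then show ?case using leaf_call_cost by simp
next
  case (sub_muL S T U D T' D' k)
  then show ?case
    by (intro fresh_call_cost) (auto simp: unfold_in_universe judgement_charge_def)
next
  case (sub_muR S T U D U' D' k)
  then show ?case
    by (intro fresh_call_cost) (auto simp: unfold_in_universe judgement_charge_def)
next
  case (sub_struct S T U D ps D' k)
  have "length ps \<le> 2 * max_size"
    using length_children_le[OF sub_struct.hyps(3)] length_components_le[of T]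
      length_components_le[of U] tsize_le_max_size[of T] tsize_le_max_size[of U]
      sub_struct.prems(1)
    by simp
  then have "step_cost * length ps \<le> judgement_charge"
    unfolding judgement_charge_def by (intro mult_le_mono2) simp
  with sub_struct show ?case
    by (intro fresh_call_cost) (auto dest: children_in_universe)
next
  case (sub_fail S T U D)
  then show ?case using call_cost_le_step_cost by (simp add: potential_def trans_le_add2)
next
  case (subs_cons D S T U D1 k1 ps D2 k2)
  have "pred_option (\<lambda>D. D \<subseteq> judgements) D1"
    using sub_subset_judgements(1)[OF subs_cons.hyps(1)] subs_cons.prems by simp
  with subs_cons show ?case by fastforce
qed simp


lemma subs_exists:
  assumes "\<And>D1 T U. Dmin \<subseteq> D1 \<Longrightarrow> D1 \<subseteq> judgements \<Longrightarrow> (T, U) \<in> set ps \<Longrightarrow>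
      \<exists>\<Delta>' k. sub (Some D1) S T U \<Delta>' k"
    and "S \<subseteq> G \<times> G" and "set ps \<subseteq> G \<times> G"
    and "pred_option (\<lambda>D1. Dmin \<subseteq> D1 \<and> D1 \<subseteq> judgements) \<Delta>"
  shows "\<exists>\<Delta>' k. subs \<Delta> S ps \<Delta>' k"
  using assms
proof (induction ps arbitrary: \<Delta>)
  case Nil
  then show ?case by (blast intro: subs_nil)
next
  case (Cons p ps)
  obtain T U where p: "p = (T, U)" by fastforce
  show ?case
  proof (cases \<Delta>)
    case None
    with Cons obtain \<Delta>' k where "subs None S ps \<Delta>' k" by fastforce
    then show ?thesis using None p by (blast intro: subs_cons sub_false)
  next
    case (Some D1)
    then obtain \<Delta>1 k1 where sub1: "sub (Some D1) S T U \<Delta>1 k1"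
      using Cons.prems(1,4) p by fastforce
    have "pred_option (\<lambda>D. D \<subseteq> judgements) \<Delta>1"
      using sub_subset_judgements(1)[OF sub1] Cons.prems(2-4) Some p by simp
    moreover have "pred_option (\<lambda>D. Dmin \<subseteq> D) \<Delta>1"
      using sub_result_grows(1)[OF sub1] Cons.prems(4) Some by (cases \<Delta>1) auto
    ultimately obtain \<Delta>' k where "subs \<Delta>1 S ps \<Delta>' k"
      using Cons by (fastforce simp: option.pred_set)
    then show ?thesis using sub1 Some p by (blast intro: subs_cons)
  qed
qed

lemma sub_exists:
  "D \<subseteq> judgements \<Longrightarrow> (S, T, U) \<in> judgements \<Longrightarrow> \<exists>\<Delta>' k. sub (Some D) S T U \<Delta>' k"
proof (induction "card (judgements - D)" arbitrary: D S T U rule: less_induct)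
  case less
  show ?case
  proof (cases "(S, T, U) \<in> D \<or> (T, U) \<in> S \<or> (T = End \<and> U = End)")
    case True
    then consider "(S, T, U) \<in> D" | "(S, T, U) \<notin> D" "(T, U) \<in> S"
      | "(S, T, U) \<notin> D" "(T, U) \<notin> S" "T = End" "U = End"
      by blast
    then show ?thesis by cases (blast intro: sub_memo sub_assm sub_end)+
  next
    case False
    let ?D0 = "insert (S, T, U) D"
    have IH: "\<exists>\<Delta>' k. sub (Some D1) S' T' U' \<Delta>' k"
      if "?D0 \<subseteq> D1" "D1 \<subseteq> judgements" "(S', T', U') \<in> judgements" for D1 S' T' U'
    proof (rule less.hyps)
      show "card (judgements - D1) < card (judgements - D)"
        using that(1) False less.prems finite_judgements by (intro psubset_card_mono) auto
    qed (use that in auto)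
    consider (muL) T' where "T = Mu T'"
      | (muR) U' where "\<not> is_mu T" "U = Mu U'"
      | (struct) ps where "\<not> is_mu T" "\<not> is_mu U" "children T U = Some ps"
      | (fail) "\<not> is_mu T" "\<not> is_mu U" "children T U = None"
      by (metis is_mu.elims(2) option.exhaust)
    then show ?thesis
    proof cases
      case muL
      then obtain \<Delta>' k where "sub (Some ?D0) (insert (T, U) S) (unfold T') U \<Delta>' k"
        using IH[of ?D0 "insert (T, U) S" "unfold T'" U] less.prems unfold_in_universe by auto
      then show ?thesis using False muL by (blast intro: sub_muL)
    next
      case muR
      then obtain \<Delta>' k where "sub (Some ?D0) (insert (T, U) S) T (unfold U') \<Delta>' k"
        using IH[of ?D0 "insert (T, U) S" T "unfold U'"] less.prems unfold_in_universe by auto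
      then show ?thesis using False muR by (blast intro: sub_muR)
    next
      case struct
      have "\<exists>\<Delta>' k. subs (Some ?D0) S ps \<Delta>' k"
        using struct less.prems children_in_universe[OF struct(3)]
        by (intro subs_exists[where Dmin = ?D0] IH) auto
      then show ?thesis using struct False by (blast intro: sub_struct)
    next
      case fail
      then show ?thesis using False by (blast intro: sub_fail)
    qed
  qed
qed

lemma sub_run_time_le:
  assumes "sub (Some {}) {} T U \<Delta>' k" and "T \<in> G" and "U \<in> G"
  shows "k \<le> (1 + card judgements)\<^sup>2 * (1 + 2 * max_size * (1 + card (G \<times> G))) * (2 * max_size + 1)"
proof -
  have "k \<le> judgement_charge * card judgements + step_cost"
    using sub_cost_amortized(1)[OF assms(1)] assms(2,3) by (simp add: potential_def)
  also have "\<dots> \<le> judgement_charge * (1 + card judgements)"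
    by (simp add: judgement_charge_def)
  also have "\<dots> = (1 + card judgements)\<^sup>2 * (1 + 2 * max_size * (1 + card (G \<times> G)))
                     * (2 * max_size + 1)"
    unfolding judgement_charge_def step_cost_def power2_eq_square by (simp only: ac_simps)
  finally show ?thesis .
qed

lemma sub_run_time_le_exp:
  assumes "sub (Some {}) {} T U \<Delta>' k" and "T \<in> G" and "U \<in> G"
    and "card G \<le> n" and "\<And>t. t \<in> G \<Longrightarrow> tsize t \<le> n ^ n"
  shows "k \<le> 2 ^ (13 * n\<^sup>2)"
proof -
  have "1 \<le> n" using assms(2,4) finite_G card_gt_0_iff[of G] by auto
  moreover have "card (G \<times> G) \<le> n\<^sup>2"
    using assms(4) by (simp add: card_cartesian_product power2_eq_square mult_le_mono)
  moreover have "max_size \<le> n ^ n"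
    unfolding max_size_def using finite_G assms(2,5) by (intro Max.boundedI) auto
  ultimately have "(1 + card judgements)\<^sup>2 * (1 + 2 * max_size * (1 + card (G \<times> G)))
                     * (2 * max_size + 1) \<le> 2 ^ (13 * n\<^sup>2)"
    unfolding card_judgements by (intro run_time_bound_arith)
  then show ?thesis using sub_run_time_le[OF assms(1-3)] by linarith
qed

end

lemma type_universe_type_closure:
  assumes "closed T" and "closed U"
  shows "type_universe (type_closure T \<union> type_closure U)"
  using successors_type_closure[OF assms(1)] successors_type_closure[OF assms(2)]
  by unfold_locales (auto simp: type_closure_def)

theorem mainTheorem6:
  "\<exists>c::nat. \<forall>T U. closed T \<longrightarrow> closed U \<longrightarrow>
     (\<exists>D' k. sub (Some {}) {} T U D' k) \<and>
     (\<forall>D' k. sub (Some {}) {} T U D' k \<longrightarrow>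
        k \<le> 2 ^ (c * (tsize T + tsize U)\<^sup>2))"
proof (intro exI[of _ 13] allI impI)
  fix T U assume "closed T" and "closed U"
  define G where "G = type_closure T \<union> type_closure U"
  interpret type_universe G
    unfolding G_def using \<open>closed T\<close> \<open>closed U\<close> by (rule type_universe_type_closure)
  let ?n = "tsize T + tsize U"
  have TU: "T \<in> G" "U \<in> G" by (simp_all add: G_def mem_type_closure)
  have card: "card G \<le> ?n"
    using card_Un_le[of "type_closure T" "type_closure U"]
      card_type_closure_le[of T] card_type_closure_le[of U]
    unfolding G_def by linarith
  have "tsize T ^ tsize T \<le> ?n ^ ?n" and "tsize U ^ tsize U \<le> ?n ^ ?n"
    by (rule self_power_mono[OF tsize_pos]; simp)+
  then have size: "tsize t \<le> ?n ^ ?n" if "t \<in> G" for t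
    using that tsize_type_closure_le[of t T] tsize_type_closure_le[of t U] unfolding G_def by auto
  show "(\<exists>D' k. sub (Some {}) {} T U D' k) \<and>
      (\<forall>D' k. sub (Some {}) {} T U D' k \<longrightarrow> k \<le> 2 ^ (13 * ?n\<^sup>2))"
    using sub_exists[of "{}" "{}" T U] sub_run_time_le_exp[OF _ TU card size] TU by auto
qed

end
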